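(* Let $X$ be an infinite-dimensional II-polyhedral real Banach space. Then $B_X$ does not have slices of arbitrarily small diameter; that is, there exists $\delta>0$ such that every slice of $B_X$ has diameter at least $\delta$.
   Context: All Banach spaces are real. For a Banach space $X$, $B_X$ denotes the closed unit ball, $X^*$ the dual, and $Ext(B_{X^*})$ the set of extreme points of $B_{X^*}$. For a set $A\subseteq X^*$, $A'$ denotes the set of accumulation points of $A$ in the weak$^*$ topology of $X^*$. $X$ is called II-polyhedral if there exists $0<r<1$ such that $(Ext B_{X^*})'\subseteq rB_{X^*}$. A slice of $B_X$ is a set of the form $S(B_X,f,\alpha)=\{x\in B_X: f(x)>\|f\|-\alpha\}$ with $f\in X^*\setminus\{0\}$ and $\alpha>0$. *)

theory Defs
  imports "HOL-Analysis.Analysis"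
begin

definition weak_star_topology :: "('a::real_normed_vector \<Rightarrow>\<^sub>L real) topology" where
  "weak_star_topology = topology_generated_by
     {{g. blinfun_apply g x \<in> U} | x U. open (U :: real set)}"

definition ext_dual_ball :: "('a::real_normed_vector \<Rightarrow>\<^sub>L real) set" where
  "ext_dual_ball = {f. f extreme_point_of cball 0 1}"

definition II_polyhedral :: "'a::real_normed_vector itself \<Rightarrow> bool" where
  "II_polyhedral (TYPE('a)) \<longleftrightarrow>
     (\<exists>r::real. 0 < r \<and> r < 1 \<and>
        weak_star_topology derived_set_of (ext_dual_ball :: ('a \<Rightarrow>\<^sub>L real) set) \<subseteq> cball 0 r)"

definition slice :: "('a::real_normed_vector \<Rightarrow>\<^sub>L real) \<Rightarrow> real \<Rightarrow> 'a set" where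
  "slice f \<alpha> = {x \<in> cball 0 1. blinfun_apply f x > norm f - \<alpha>}"

end

theory Submission
  imports Defs
begin

(*
  Let r < 1 bound the norms of the weak* accumulation points of Ext B_X* and let x lie in the
  slice S(B_X, f, alpha). By weak* compactness of B_X*, only finitely many extreme functionals
  e satisfy e x >= (1 + r) / 2, so in infinite dimensions some unit vector u is annihilated by
  f and by all of them. The norm of x + c u is attained at an extreme functional: Hahn--Banach
  gives a norming functional, and a Krein--Milman type argument on weak*-closed faces of the
  dual ball gives an extreme one. At the finitely many large extreme functionals x + c u takes
  the value e x <= 1, at all others at most (1 + r) / 2 + |c|. Hence x + c u stays in the
  slice for |c| <= (1 - r) / 2, and every slice has diameter at least 1 - r.
*)

lemma Zorn_minimal:
  fixes A :: "'b::order set"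
  assumes "A \<noteq> {}"
    and chain_lb: "\<And>C. C \<subseteq> A \<Longrightarrow> C \<noteq> {} \<Longrightarrow> \<forall>a\<in>C. \<forall>b\<in>C. a \<le> b \<or> b \<le> a
                        \<Longrightarrow> \<exists>u\<in>A. \<forall>a\<in>C. u \<le> a"
  shows "\<exists>m\<in>A. \<forall>a\<in>A. a \<le> m \<longrightarrow> a = m"
proof -
  have po: "partial_order_on A (relation_of (\<lambda>a b. b \<le> a) A)"
    by (rule partial_order_on_relation_ofI) auto
  have "\<exists>m\<in>A. \<forall>a\<in>A. m \<ge> a \<longrightarrow> a = m"
  proof (rule predicate_Zorn[OF po])
    fix C assume C: "C \<in> Chains (relation_of (\<lambda>a b. b \<le> a) A)"
    then have "C \<subseteq> A" by (rule Chains_relation_of)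
    moreover have "\<forall>a\<in>C. \<forall>b\<in>C. a \<le> b \<or> b \<le> a"
      using C unfolding Chains_def relation_of_def by blast
    ultimately show "\<exists>u\<in>A. \<forall>a\<in>C. a \<ge> u"
      using chain_lb \<open>A \<noteq> {}\<close> by (cases "C = {}") auto
  qed
  then show ?thesis by auto
qed

lemma compactin_chain_Inter_nonempty:
  assumes K: "compactin X K" and ne: "\<C> \<noteq> {}"
    and sets: "\<And>F. F \<in> \<C> \<Longrightarrow> closedin X F \<and> F \<subseteq> K \<and> F \<noteq> {}"
    and chain: "\<forall>F\<in>\<C>. \<forall>G\<in>\<C>. F \<subseteq> G \<or> G \<subseteq> F"
  shows "\<Inter>\<C> \<noteq> {}"
proof -
  have "K \<inter> \<Inter>\<F> \<noteq> {}" if fin: "finite \<F>" and sub: "\<F> \<subseteq> \<C>" for \<F>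
  proof (cases "\<F> = {}")
    case True
    obtain F where "F \<in> \<C>" using ne by blast
    then have "K \<noteq> {}" using sets by blast
    then show ?thesis using True by simp
  next
    case False
    have "subset.chain \<C> \<F>" using sub chain by (auto simp: subset_chain_def)
    then have "\<Inter>\<F> \<in> \<F>" by (rule Inter_in_chain[OF fin False])
    then have "\<Inter>\<F> \<subseteq> K" "\<Inter>\<F> \<noteq> {}" using sub sets by blast+
    then show ?thesis by blast
  qed
  moreover have "\<forall>F\<in>\<C>. closedin X F" using sets by blast
  ultimately have "K \<inter> \<Inter>\<C> \<noteq> {}"
    using K unfolding compactin_fip by blast
  then show ?thesis by blast
qed

lemma face_of_Int_supporting_hyperplane_linear:
  fixes S :: "'v::real_vector set"
    and h :: "'v \<Rightarrow> real"
  assumes S: "convex S" and h: "linear h" and le: "\<And>x. x \<in> S \<Longrightarrow> h x \<le> m"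
  shows "(S \<inter> {x. h x = m}) face_of S"
proof -
  interpret linear h by (rule h)
  have "{x. h x = m} = h -` {m}" by auto
  then have convex: "convex (S \<inter> {x. h x = m})"
    using convex_Int[OF S convex_linear_vimage[OF h convex_singleton]] by simp
  have "\<forall>a\<in>S. \<forall>b\<in>S. \<forall>x\<in>S \<inter> {x. h x = m}. x \<in> open_segment a b \<longrightarrow>
          a \<in> S \<inter> {x. h x = m} \<and> b \<in> S \<inter> {x. h x = m}"
  proof (intro ballI impI)
    fix a b x assume a: "a \<in> S" and b: "b \<in> S" and x: "x \<in> S \<inter> {x. h x = m}"
      and seg: "x \<in> open_segment a b"
    obtain u where u: "0 < u" "u < 1" "x = (1 - u) *\<^sub>R a + u *\<^sub>R b"
      using seg by (auto simp: in_segment)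
    then have "h x = (1 - u) * h a + u * h b" by (simp add: add scale)
    then have "(1 - u) * (m - h a) + u * (m - h b) = 0"
      using x by (simp add: algebra_simps)
    moreover have "0 \<le> (1 - u) * (m - h a)" "0 \<le> u * (m - h b)"
      using u le[OF a] le[OF b] by simp_all
    ultimately have "(1 - u) * (m - h a) = 0" "u * (m - h b) = 0" by linarith+
    then have "h a = m \<and> h b = m" using u by auto
    then show "a \<in> S \<inter> {x. h x = m} \<and> b \<in> S \<inter> {x. h x = m}" using a b by auto
  qed
  then show ?thesis
    unfolding face_of_def by (intro conjI[OF Int_lower1 conjI[OF convex]])
qed

section \<open>Sublinear functionals and the Hahn--Banach theorem\<close>

definition sublinear :: "('a::real_vector \<Rightarrow> real) \<Rightarrow> bool" where
  "sublinear p \<longleftrightarrow>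
     (\<forall>x y. p (x + y) \<le> p x + p y) \<and> (\<forall>c x. 0 \<le> c \<longrightarrow> p (c *\<^sub>R x) = c * p x)"

lemma sublinearI:
  assumes add: "\<And>x y. p (x + y) \<le> p x + p y"
    and scale: "\<And>c x. 0 < c \<Longrightarrow> p (c *\<^sub>R x) \<le> c * p x"
    and zero: "p 0 = 0"
  shows "sublinear p"
  unfolding sublinear_def
proof (intro conjI allI impI add)
  fix c :: real and x assume "0 \<le> c"
  show "p (c *\<^sub>R x) = c * p x"
  proof (cases "c = 0")
    case False
    with \<open>0 \<le> c\<close> have c: "0 < c" by simp
    have "p x = p (inverse c *\<^sub>R (c *\<^sub>R x))" using c by simp
    also have "\<dots> \<le> inverse c * p (c *\<^sub>R x)" using c by (intro scale) simp
    finally have "c * p x \<le> p (c *\<^sub>R x)" using c by (simp add: field_simps)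
    then show ?thesis using scale[OF c, of x] by linarith
  qed (simp add: zero)
qed

lemma sublinear_zero: "sublinear p \<Longrightarrow> p 0 = 0"
  unfolding sublinear_def by (metis mult_zero_left order_refl scaleR_zero_left)

lemma sublinear_neg_le: "sublinear p \<Longrightarrow> - p (- x) \<le> p x"
proof -
  assume p: "sublinear p"
  have "p (x + - x) \<le> p x + p (- x)" using p unfolding sublinear_def by blast
  then show ?thesis using sublinear_zero[OF p] by simp
qed

lemma bdd_below_dominated_sublinear:
  assumes "\<And>q. q \<in> C \<Longrightarrow> sublinear q \<and> q \<le> p"
  shows "bdd_below ((\<lambda>q. q x) ` C)"
proof (rule bdd_belowI2)
  fix q assume "q \<in> C"
  then have "- q (- x) \<le> q x" "q (- x) \<le> p (- x)"
    using assms sublinear_neg_le by (auto simp: le_fun_def)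
  then show "- p (- x) \<le> q x" by linarith
qed

lemma sublinear_chain_Inf:
  fixes C :: "('a::real_vector \<Rightarrow> real) set"
  assumes dom: "\<And>q. q \<in> C \<Longrightarrow> sublinear q \<and> q \<le> p" and ne: "C \<noteq> {}"
    and chain: "\<forall>a\<in>C. \<forall>b\<in>C. a \<le> b \<or> b \<le> a"
  shows "sublinear (\<lambda>x. INF q\<in>C. q x)"
proof -
  define u where "u x = (INF q\<in>C. q x)" for x
  have lower: "u x \<le> q x" if "q \<in> C" for q x
    unfolding u_def by (rule cINF_lower[OF bdd_below_dominated_sublinear[OF dom] that])
  have greatest: "m \<le> u x" if "\<And>q. q \<in> C \<Longrightarrow> m \<le> q x" for m x
    unfolding u_def by (rule cINF_greatest[OF ne that])
  have "sublinear u"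
  proof (rule sublinearI)
    fix x y
    have "u (x + y) - q2 y \<le> u x" if q2: "q2 \<in> C" for q2
    proof (rule greatest)
      fix q1 assume q1: "q1 \<in> C"
      obtain q where q: "q \<in> C" "q \<le> q1" "q \<le> q2" using chain q1 q2 by blast
      have "u (x + y) \<le> q x + q y"
        using lower[OF q(1)] dom[OF q(1)] unfolding sublinear_def by (meson order_trans)
      moreover have "q x \<le> q1 x" "q y \<le> q2 y" using q(2,3) by (auto simp: le_fun_def)
      ultimately show "u (x + y) - q2 y \<le> q1 x" by linarith
    qed
    then have "u (x + y) - u x \<le> u y" by (intro greatest) (simp add: algebra_simps)
    then show "u (x + y) \<le> u x + u y" by simp
  next
    fix c :: real and x assume c: "0 < c"
    have "u (c *\<^sub>R x) / c \<le> u x"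
    proof (rule greatest)
      fix q assume q: "q \<in> C"
      have "u (c *\<^sub>R x) \<le> c * q x"
        using lower[OF q] dom[OF q] c unfolding sublinear_def by (metis less_eq_real_def)
      then show "u (c *\<^sub>R x) / c \<le> q x" using c by (simp add: field_simps)
    qed
    then show "u (c *\<^sub>R x) \<le> c * u x" using c by (simp add: field_simps)
  next
    have "(\<lambda>q. q 0) ` C = {0}" using dom sublinear_zero ne by force
    then show "u 0 = 0" by (simp add: u_def)
  qed
  then show ?thesis unfolding u_def[abs_def] .
qed

definition sublinear_shift :: "('a::real_vector \<Rightarrow> real) \<Rightarrow> 'a \<Rightarrow> 'a \<Rightarrow> real" where
  "sublinear_shift q y x = (INF t\<in>{0..}. q (x + t *\<^sub>R y) - t * q y)"

lemma sublinear_shift_le: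
  assumes q: "sublinear q" and t: "0 \<le> t"
  shows "sublinear_shift q y x \<le> q (x + t *\<^sub>R y) - t * q y"
  unfolding sublinear_shift_def
proof (rule cINF_lower)
  show "bdd_below ((\<lambda>t. q (x + t *\<^sub>R y) - t * q y) ` {0..})"
  proof (rule bdd_belowI2)
    fix t :: real assume t: "t \<in> {0..}"
    have "q (t *\<^sub>R y) \<le> q (x + t *\<^sub>R y) + q (- x)"
      using q unfolding sublinear_def by (metis add.commute add_minus_cancel)
    moreover have "q (t *\<^sub>R y) = t * q y" using q t unfolding sublinear_def by auto
    ultimately show "- q (- x) \<le> q (x + t *\<^sub>R y) - t * q y" by linarith
  qed
qed (use t in simp)

lemma sublinear_shift_greatest:
  "(\<And>t. 0 \<le> t \<Longrightarrow> m \<le> q (x + t *\<^sub>R y) - t * q y) \<Longrightarrow> m \<le> sublinear_shift q y x"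
  unfolding sublinear_shift_def by (rule cINF_greatest) auto

lemma sublinear_shift_le_self: "sublinear q \<Longrightarrow> sublinear_shift q y x \<le> q x"
  using sublinear_shift_le[of q 0 y x] by simp

lemma sublinear_shift_neg: "sublinear q \<Longrightarrow> sublinear_shift q y (- y) \<le> - q y"
  using sublinear_shift_le[of q 1 y "- y"] sublinear_zero[of q] by simp

lemma sublinear_sublinear_shift:
  assumes q: "sublinear q"
  shows "sublinear (sublinear_shift q y)"
proof (rule sublinearI)
  fix x x' :: 'a
  have "sublinear_shift q y (x + x') - (q (x' + t' *\<^sub>R y) - t' * q y) \<le> sublinear_shift q y x"
    if t': "0 \<le> t'" for t'
  proof (rule sublinear_shift_greatest)
    fix t :: real assume t: "0 \<le> t"
    have "(x + x') + (t + t') *\<^sub>R y = (x + t *\<^sub>R y) + (x' + t' *\<^sub>R y)"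
      by (simp add: algebra_simps)
    then have "q ((x + x') + (t + t') *\<^sub>R y) \<le> q (x + t *\<^sub>R y) + q (x' + t' *\<^sub>R y)"
      using q unfolding sublinear_def by metis
    moreover have "sublinear_shift q y (x + x') \<le> q ((x + x') + (t + t') *\<^sub>R y) - (t + t') * q y"
      using sublinear_shift_le[OF q] t t' by simp
    ultimately show "sublinear_shift q y (x + x') - (q (x' + t' *\<^sub>R y) - t' * q y)
        \<le> q (x + t *\<^sub>R y) - t * q y"
      by (simp add: algebra_simps)
  qed
  then have "sublinear_shift q y (x + x') - sublinear_shift q y x \<le> sublinear_shift q y x'"
    by (intro sublinear_shift_greatest) (simp add: algebra_simps)
  then show "sublinear_shift q y (x + x') \<le> sublinear_shift q y x + sublinear_shift q y x'"
    by simp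
next
  fix c :: real and x :: 'a assume c: "0 < c"
  have "sublinear_shift q y (c *\<^sub>R x) / c \<le> sublinear_shift q y x"
  proof (rule sublinear_shift_greatest)
    fix t :: real assume t: "0 \<le> t"
    have "c *\<^sub>R x + (c * t) *\<^sub>R y = c *\<^sub>R (x + t *\<^sub>R y)" by (simp add: scaleR_add_right)
    then have "q (c *\<^sub>R x + (c * t) *\<^sub>R y) = c * q (x + t *\<^sub>R y)"
      using q c unfolding sublinear_def by simp
    moreover have "sublinear_shift q y (c *\<^sub>R x) \<le> q (c *\<^sub>R x + (c * t) *\<^sub>R y) - (c * t) * q y"
      using sublinear_shift_le[OF q] t c by simp
    ultimately show "sublinear_shift q y (c *\<^sub>R x) / c \<le> q (x + t *\<^sub>R y) - t * q y"
      using c by (simp add: field_simps)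
  qed
  then show "sublinear_shift q y (c *\<^sub>R x) \<le> c * sublinear_shift q y x"
    using c by (simp add: field_simps)
next
  show "sublinear_shift q y 0 = 0"
  proof (rule antisym)
    show "sublinear_shift q y 0 \<le> 0"
      using sublinear_shift_le_self[OF q] sublinear_zero[OF q] by metis
    show "0 \<le> sublinear_shift q y 0"
      by (rule sublinear_shift_greatest) (use q in \<open>simp add: sublinear_def\<close>)
  qed
qed

lemma sublinear_dominates_linear:
  fixes p :: "'a::real_vector \<Rightarrow> real"
  assumes p: "sublinear p"
  shows "\<exists>q. linear q \<and> (\<forall>x. q x \<le> p x)"
proof -
  define A where "A = {q. sublinear q \<and> q \<le> p}"
  have "\<exists>m\<in>A. \<forall>a\<in>A. a \<le> m \<longrightarrow> a = m"
  proof (rule Zorn_minimal)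
    show "A \<noteq> {}" using p by (auto simp: A_def)
    fix C assume C: "C \<subseteq> A" "C \<noteq> {}" "\<forall>a\<in>C. \<forall>b\<in>C. a \<le> b \<or> b \<le> a"
    define u where "u = (\<lambda>x. INF q\<in>C. q x)"
    have dom: "\<And>q. q \<in> C \<Longrightarrow> sublinear q \<and> q \<le> p" using C(1) by (auto simp: A_def)
    have lower: "\<forall>q\<in>C. u \<le> q"
      unfolding u_def le_fun_def
      using cINF_lower[OF bdd_below_dominated_sublinear[OF dom]] by blast
    moreover obtain q where "q \<in> C" using C(2) by blast
    ultimately have "u \<le> p" using dom order_trans by blast
    then have "u \<in> A"
      using sublinear_chain_Inf[OF dom C(2,3)] unfolding A_def u_def by simp
    then show "\<exists>u\<in>A. \<forall>a\<in>C. u \<le> a" using lower by blast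
  qed
  then obtain m where m: "sublinear m" "m \<le> p" and minimal: "\<And>a. a \<in> A \<Longrightarrow> a \<le> m \<Longrightarrow> a = m"
    unfolding A_def by blast
  \<comment> \<open>minimality forces m to coincide with its shifts, which makes it odd, hence linear\<close>
  have odd: "m (- y) = - m y" for y
  proof -
    have "sublinear_shift m y \<le> m"
      using sublinear_shift_le_self[OF m(1)] by (auto simp: le_fun_def)
    moreover then have "sublinear_shift m y \<in> A"
      using sublinear_sublinear_shift[OF m(1)] m(2) unfolding A_def by (auto intro: order_trans)
    ultimately have "sublinear_shift m y = m" using minimal by blast
    then have "m (- y) \<le> - m y" using sublinear_shift_neg[OF m(1), of y] by simp
    moreover have "- m (- y) \<le> m y" using sublinear_neg_le[OF m(1)] .
    ultimately show ?thesis by linarith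
  qed
  have "m (x + y) = m x + m y" for x y
  proof -
    have "m (x + y) \<le> m x + m y" "m (- x + - y) \<le> m (- x) + m (- y)"
      using m(1) unfolding sublinear_def by blast+
    then show ?thesis using odd[of "x + y"] odd[of x] odd[of y] by (simp add: add.commute)
  qed
  moreover have "m (c *\<^sub>R x) = c * m x" for c x
  proof (cases "0 \<le> c")
    case False
    then have "m ((- c) *\<^sub>R x) = (- c) * m x"
      using m(1) unfolding sublinear_def by (simp del: scaleR_minus_left)
    then show ?thesis using odd[of "c *\<^sub>R x"] by simp
  qed (use m(1) in \<open>simp add: sublinear_def\<close>)
  ultimately have "linear m" by (intro linearI) auto
  then show ?thesis using m(2) by (auto simp: le_fun_def)
qed

section \<open>The dual unit ball in the topology of pointwise convergence\<close>

text \<open>The dual unit ball, seen as a set of functions in the product space of reals indexed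
  by the points of X. Its weak* topology is induced by the product (pointwise) topology, in
  which it is compact (Banach--Alaoglu).\<close>

definition dual_ball_functions :: "('a::real_normed_vector \<Rightarrow> real) set" where
  "dual_ball_functions = {\<phi>. linear \<phi> \<and> (\<forall>x. \<bar>\<phi> x\<bar> \<le> norm x)}"

lemma blinfun_apply_le_norm: "norm g \<le> 1 \<Longrightarrow> blinfun_apply g z \<le> norm z"
  using norm_blinfun[of g z] mult_right_mono[of "norm g" 1 "norm z"] by simp

lemma blinfun_apply_cball_eq:
  "blinfun_apply ` cball (0 :: 'a::real_normed_vector \<Rightarrow>\<^sub>L real) 1 = dual_ball_functions"
proof safe
  fix g :: "'a \<Rightarrow>\<^sub>L real" assume "g \<in> cball 0 1"
  then have "\<bar>g x\<bar> \<le> norm x" for x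
    using blinfun_apply_le_norm[of g x] blinfun_apply_le_norm[of g "- x"]
    by (simp add: blinfun.minus_right abs_le_iff)
  moreover have "linear (blinfun_apply g)"
    using blinfun.bounded_linear_right bounded_linear.linear by blast
  ultimately show "blinfun_apply g \<in> dual_ball_functions" by (simp add: dual_ball_functions_def)
next
  fix \<phi> :: "'a \<Rightarrow> real" assume "\<phi> \<in> dual_ball_functions"
  then have l: "linear \<phi>" and b: "\<And>x. \<bar>\<phi> x\<bar> \<le> norm x" by (auto simp: dual_ball_functions_def)
  interpret linear \<phi> by (rule l)
  have "bounded_linear \<phi>"
    by (rule bounded_linear_intro[where K=1]) (use b add scale in auto)
  then have apply_eq: "blinfun_apply (Blinfun \<phi>) = \<phi>" by (rule bounded_linear_Blinfun_apply)
  have "norm (Blinfun \<phi>) \<le> 1" by (rule norm_blinfun_bound) (use b apply_eq in auto)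
  then show "\<phi> \<in> blinfun_apply ` cball 0 1" using apply_eq by (metis mem_cball_0 rev_image_eqI)
qed

lemma exists_norming_functional:
  fixes z :: "'a::real_normed_vector"
  shows "\<exists>g :: 'a \<Rightarrow>\<^sub>L real. norm g \<le> 1 \<and> blinfun_apply g z = norm z"
proof -
  have norm: "sublinear (norm :: 'a \<Rightarrow> real)"
    unfolding sublinear_def by (auto simp: norm_triangle_ineq)
  obtain q where q: "linear q" "\<And>x. q x \<le> sublinear_shift norm z x"
    using sublinear_dominates_linear[OF sublinear_sublinear_shift[OF norm, of z]] by blast
  interpret q: linear q by (rule q(1))
  have le: "q x \<le> norm x" for x using q(2) sublinear_shift_le_self[OF norm] order_trans by blast
  then have "\<bar>q x\<bar> \<le> norm x" for x using le[of "- x"] q.neg by (auto simp: abs_le_iff)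
  then have "q \<in> dual_ball_functions" using q(1) by (simp add: dual_ball_functions_def)
  then obtain g :: "'a \<Rightarrow>\<^sub>L real" where "norm g \<le> 1" "blinfun_apply g = q"
    unfolding blinfun_apply_cball_eq[symmetric] by auto
  moreover have "q z = norm z"
    using le[of z] q(2)[of "- z"] sublinear_shift_neg[OF norm, of z] q.neg by simp
  ultimately show ?thesis by auto
qed

abbreviation pointwise_topology :: "('a \<Rightarrow> real) topology" where
  "pointwise_topology \<equiv> product_topology (\<lambda>_. euclideanreal) UNIV"

lemma continuous_map_eval: "continuous_map pointwise_topology euclideanreal (\<lambda>\<phi>. \<phi> x)"
  using continuous_map_product_projection[of x UNIV "\<lambda>_. euclideanreal"] by simp

lemma closedin_pointwise_topology_vimage:
  assumes "continuous_map pointwise_topology euclideanreal h" "closed C"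
  shows "closedin pointwise_topology {\<phi>. h \<phi> \<in> C}"
  using closedin_continuous_map_preimage[OF assms(1), of C] assms(2)
  by (simp add: PiE_def extensional_def)

lemma closedin_dual_ball_functions:
  "closedin pointwise_topology (dual_ball_functions :: ('a::real_normed_vector \<Rightarrow> real) set)"
proof -
  have add: "closedin pointwise_topology {\<phi>::'a \<Rightarrow> real. \<phi> (a + b) = \<phi> a + \<phi> b}" for a b
    using closedin_pointwise_topology_vimage[of "\<lambda>\<phi>. \<phi> (a + b) - (\<phi> a + \<phi> b)" "{0}"]
    by (simp add: continuous_map_diff continuous_map_add continuous_map_eval)
  have scale: "closedin pointwise_topology {\<phi>::'a \<Rightarrow> real. \<phi> (c *\<^sub>R a) = c * \<phi> a}" for c a
    using closedin_pointwise_topology_vimage[of "\<lambda>\<phi>. \<phi> (c *\<^sub>R a) - c * \<phi> a" "{0}"]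
    by (simp add: continuous_map_diff continuous_map_real_mult_left continuous_map_eval)
  have bound: "closedin pointwise_topology {\<phi>::'a \<Rightarrow> real. \<bar>\<phi> a\<bar> \<le> norm a}" for a
  proof -
    have "{\<phi>::'a \<Rightarrow> real. \<bar>\<phi> a\<bar> \<le> norm a} = {\<phi>. \<phi> a \<in> {- norm a..norm a}}"
      by (auto simp: abs_le_iff)
    then show ?thesis
      using closedin_pointwise_topology_vimage[OF continuous_map_eval closed_atLeastAtMost] by simp
  qed
  have eq: "(dual_ball_functions :: ('a \<Rightarrow> real) set) =
      (\<Inter>p\<in>UNIV. {\<phi>. \<phi> (fst p + snd p) = \<phi> (fst p) + \<phi> (snd p)}) \<inter>
      (\<Inter>p\<in>UNIV. {\<phi>. \<phi> (fst p *\<^sub>R snd p) = fst p * \<phi> (snd p)}) \<inter>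
      (\<Inter>a\<in>UNIV. {\<phi>. \<bar>\<phi> a\<bar> \<le> norm a})"
    unfolding dual_ball_functions_def linear_iff by auto
  show ?thesis
    unfolding eq by (intro closedin_Int closedin_Inter) (auto simp: add scale bound)
qed

lemma compactin_dual_ball_functions:
  "compactin pointwise_topology (dual_ball_functions :: ('a::real_normed_vector \<Rightarrow> real) set)"
proof -
  have box: "compactin pointwise_topology (PiE UNIV (\<lambda>x::'a. {- norm x..norm x}))"
    by (simp add: compactin_PiE)
  have "dual_ball_functions \<subseteq> PiE UNIV (\<lambda>x::'a. {- norm x..norm x})"
    by (auto simp: dual_ball_functions_def abs_le_iff minus_le_iff)
  then show ?thesis
    using closed_Int_compactin[OF closedin_dual_ball_functions box] by (simp add: inf_absorb1)
qed

lemma openin_weak_star_topologyD: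
  assumes "openin weak_star_topology W"
  shows "\<exists>V. openin pointwise_topology V \<and> W = blinfun_apply -` V"
proof -
  have "generate_topology_on {{g. blinfun_apply g x \<in> U} | x U. open (U :: real set)} W"
    using assms unfolding weak_star_topology_def openin_topology_generated_by_iff .
  then show ?thesis
  proof (induction rule: generate_topology_on.induct)
    case (Int a b)
    then obtain Va Vb where "openin pointwise_topology Va" "a = blinfun_apply -` Va"
      "openin pointwise_topology Vb" "b = blinfun_apply -` Vb" by blast
    then show ?case by (intro exI[of _ "Va \<inter> Vb"]) auto
  next
    case (UN K)
    then obtain f where f: "\<And>k. k \<in> K \<Longrightarrow> openin pointwise_topology (f k) \<and> k = blinfun_apply -` f k"
      by metis
    then show ?case by (intro exI[of _ "\<Union>(f ` K)"]) auto
  next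
    case (Basis s)
    then obtain x U where "s = blinfun_apply -` {\<phi>. \<phi> x \<in> U}" "open U" by auto
    moreover have "openin pointwise_topology {\<phi>. \<phi> x \<in> U}" if "open U"
      using openin_continuous_map_preimage[OF continuous_map_eval[of x], of U] that by simp
    ultimately show ?case by blast
  qed (intro exI[of _ "{}"], auto)
qed

lemma topspace_weak_star_topology:
  "topspace (weak_star_topology :: ('a::real_normed_vector \<Rightarrow>\<^sub>L real) topology) = UNIV"
proof -
  have "UNIV \<in> {{g::'a \<Rightarrow>\<^sub>L real. blinfun_apply g x \<in> U} | x U. open (U :: real set)}"
    by (intro CollectI exI[of _ 0] exI[of _ UNIV]) auto
  then show ?thesis unfolding weak_star_topology_def topology_generated_by_topspace by blast
qed

lemma weak_star_derived_set_of_blinfun_apply: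
  fixes T :: "('a::real_normed_vector \<Rightarrow>\<^sub>L real) set"
  assumes "blinfun_apply g \<in> pointwise_topology derived_set_of (blinfun_apply ` T)"
  shows "g \<in> weak_star_topology derived_set_of T"
  unfolding derived_set_of_def topspace_weak_star_topology
proof (intro CollectI conjI allI impI UNIV_I)
  fix W assume W: "g \<in> W \<and> openin weak_star_topology W"
  then obtain V where V: "openin pointwise_topology V" "W = blinfun_apply -` V"
    using openin_weak_star_topologyD by blast
  then obtain h where "h \<in> T" "blinfun_apply h \<noteq> blinfun_apply g" "blinfun_apply h \<in> V"
    using assms W unfolding derived_set_of_def by blast
  then show "\<exists>y. y \<noteq> g \<and> y \<in> T \<and> y \<in> W" using V(2) by (intro exI[of _ h]) auto
qed

section \<open>Extreme points of the dual unit ball\<close>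

lemma linear_blinfun_apply_at: "linear (\<lambda>g::'a::real_normed_vector \<Rightarrow>\<^sub>L real. blinfun_apply g x)"
  by (rule linearI) (auto simp: plus_blinfun.rep_eq scaleR_blinfun.rep_eq)

lemma closedin_blinfun_apply_level_set:
  fixes F :: "('a::real_normed_vector \<Rightarrow>\<^sub>L real) set"
  assumes "closedin pointwise_topology (blinfun_apply ` F)"
  shows "closedin pointwise_topology (blinfun_apply ` (F \<inter> {g. blinfun_apply g x = c}))"
proof -
  have "blinfun_apply ` (F \<inter> {g. blinfun_apply g x = c}) = blinfun_apply ` F \<inter> {\<phi>. \<phi> x \<in> {c}}"
    by auto
  then show ?thesis
    using closedin_Int[OF assms closedin_pointwise_topology_vimage[OF continuous_map_eval closed_singleton]]
    by simp
qed

lemma closed_face_of_dual_ball_proper_subface: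
  fixes M :: "('a::real_normed_vector \<Rightarrow>\<^sub>L real) set"
  assumes M: "M face_of cball 0 1" "closedin pointwise_topology (blinfun_apply ` M)"
    and g: "g1 \<in> M" "g2 \<in> M" "g1 \<noteq> g2"
  obtains M' where "M' face_of M" "M' \<noteq> {}" "M' \<noteq> M"
    "closedin pointwise_topology (blinfun_apply ` M')"
proof -
  obtain x where x: "blinfun_apply g1 x \<noteq> blinfun_apply g2 x" using g(3) by (meson blinfun_eqI)
  have "blinfun_apply ` M \<subseteq> dual_ball_functions"
    using face_of_imp_subset[OF M(1)] blinfun_apply_cball_eq by blast
  then have "compactin pointwise_topology (blinfun_apply ` M)"
    using closed_Int_compactin[OF M(2) compactin_dual_ball_functions] by (simp add: inf_absorb1)
  then have "compactin euclideanreal ((\<lambda>\<phi>. \<phi> x) ` blinfun_apply ` M)"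
    by (rule image_compactin[OF _ continuous_map_eval])
  then have "compact ((\<lambda>g. blinfun_apply g x) ` M)" by (simp add: image_image)
  then obtain m where m: "m \<in> (\<lambda>g. blinfun_apply g x) ` M"
    and max: "\<And>g. g \<in> M \<Longrightarrow> blinfun_apply g x \<le> m"
    using compact_attains_sup[of "(\<lambda>g. blinfun_apply g x) ` M"] g(1) by blast
  show thesis
  proof
    show "M \<inter> {g. blinfun_apply g x = m} face_of M"
      by (rule face_of_Int_supporting_hyperplane_linear[OF face_of_imp_convex[OF M(1)]
            linear_blinfun_apply_at max])
    show "M \<inter> {g. blinfun_apply g x = m} \<noteq> {}" using m by auto
    show "M \<inter> {g. blinfun_apply g x = m} \<noteq> M"
    proof
      assume "M \<inter> {g. blinfun_apply g x = m} = M"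
      then have "blinfun_apply g1 x = m" "blinfun_apply g2 x = m" using g(1,2) by blast+
      with x show False by simp
    qed
    show "closedin pointwise_topology (blinfun_apply ` (M \<inter> {g. blinfun_apply g x = m}))"
      by (rule closedin_blinfun_apply_level_set[OF M(2)])
  qed
qed

lemma weak_star_closed_chain_Inter:
  fixes C :: "('a::real_normed_vector \<Rightarrow>\<^sub>L real) set set"
  assumes ne: "C \<noteq> {}" and chain: "\<forall>G\<in>C. \<forall>H\<in>C. G \<subseteq> H \<or> H \<subseteq> G"
    and sets: "\<And>G. G \<in> C \<Longrightarrow>
                 G \<subseteq> cball 0 1 \<and> G \<noteq> {} \<and> closedin pointwise_topology (blinfun_apply ` G)"
  shows "\<Inter>C \<noteq> {}" "closedin pointwise_topology (blinfun_apply ` \<Inter>C)"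
proof -
  have image_Inter: "blinfun_apply ` \<Inter>C = (\<Inter>G\<in>C. blinfun_apply ` G)"
    using image_INT[of blinfun_apply UNIV C "\<lambda>G. G"] ne
    by (auto simp: inj_on_def blinfun_apply_inject)
  show "closedin pointwise_topology (blinfun_apply ` \<Inter>C)"
    unfolding image_Inter using ne sets by (intro closedin_Inter) auto
  have "blinfun_apply ` \<Inter>C \<noteq> {}"
    unfolding image_Inter
  proof (rule compactin_chain_Inter_nonempty[OF compactin_dual_ball_functions])
    show "(\<lambda>G. blinfun_apply ` G) ` C \<noteq> {}" using ne by blast
    have "\<forall>G\<in>C. \<forall>H\<in>C. blinfun_apply ` G \<subseteq> blinfun_apply ` H \<or> blinfun_apply ` H \<subseteq> blinfun_apply ` G"
      using chain by (meson image_mono)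
    then show "\<forall>S\<in>(\<lambda>G. blinfun_apply ` G) ` C. \<forall>T\<in>(\<lambda>G. blinfun_apply ` G) ` C. S \<subseteq> T \<or> T \<subseteq> S"
      by blast
    fix S assume "S \<in> (\<lambda>G. blinfun_apply ` G) ` C"
    then obtain G where "G \<in> C" "S = blinfun_apply ` G" by blast
    then show "closedin pointwise_topology S \<and> S \<subseteq> dual_ball_functions \<and> S \<noteq> {}"
      using sets blinfun_apply_cball_eq by blast
  qed
  then show "\<Inter>C \<noteq> {}" by blast
qed

lemma closed_face_of_dual_ball_has_extreme_point:
  fixes F :: "('a::real_normed_vector \<Rightarrow>\<^sub>L real) set"
  assumes F: "F face_of cball 0 1" "F \<noteq> {}" "closedin pointwise_topology (blinfun_apply ` F)"
  shows "\<exists>e\<in>F. e extreme_point_of cball 0 1"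
proof -
  define A where "A = {G. G face_of F \<and> G \<noteq> {} \<and> closedin pointwise_topology (blinfun_apply ` G)}"
  have "\<exists>M\<in>A. \<forall>G\<in>A. G \<le> M \<longrightarrow> G = M"
  proof (rule Zorn_minimal)
    show "A \<noteq> {}" using F face_of_refl[OF face_of_imp_convex[OF F(1)]] by (auto simp: A_def)
    fix C assume C: "C \<subseteq> A" "C \<noteq> {}" "\<forall>a\<in>C. \<forall>b\<in>C. a \<le> b \<or> b \<le> a"
    then have faces: "G face_of F" "G \<noteq> {}" "closedin pointwise_topology (blinfun_apply ` G)"
      if "G \<in> C" for G using that by (auto simp: A_def)
    have "G \<subseteq> cball 0 1" if "G \<in> C" for G
      using faces(1)[OF that] F(1) face_of_imp_subset by blast
    then have "\<Inter>C \<noteq> {}" "closedin pointwise_topology (blinfun_apply ` \<Inter>C)"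
      using weak_star_closed_chain_Inter[OF C(2,3)] faces by blast+
    moreover have "\<Inter>C face_of F" using C(2) faces(1) by (rule face_of_Inter)
    ultimately have "\<Inter>C \<in> A" unfolding A_def by blast
    then show "\<exists>u\<in>A. \<forall>G\<in>C. u \<le> G" by blast
  qed
  then obtain M where M: "M face_of F" "M \<noteq> {}" "closedin pointwise_topology (blinfun_apply ` M)"
    and minimal: "\<And>G. G \<in> A \<Longrightarrow> G \<subseteq> M \<Longrightarrow> G = M"
    unfolding A_def by blast
  have MB: "M face_of cball 0 1" using M(1) F(1) by (rule face_of_trans)
  obtain e where e: "e \<in> M" using M(2) by blast
  have "M = {e}"
  proof (rule ccontr)
    assume "M \<noteq> {e}"
    then obtain g where "g \<in> M" "g \<noteq> e" using e by blast
    then obtain M' where "M' face_of M" "M' \<noteq> {}" "M' \<noteq> M"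
        "closedin pointwise_topology (blinfun_apply ` M')"
      using closed_face_of_dual_ball_proper_subface[OF MB M(3) e] by blast
    moreover have "M' face_of F" "M' \<subseteq> M"
      using \<open>M' face_of M\<close> M(1) face_of_trans face_of_imp_subset by blast+
    ultimately show False using minimal unfolding A_def by blast
  qed
  then have "e extreme_point_of cball 0 1" using MB by (simp add: face_of_singleton)
  then show ?thesis using e M(1) face_of_imp_subset by blast
qed

lemma exists_extreme_norming_functional:
  fixes z :: "'a::real_normed_vector"
  shows "\<exists>e\<in>ext_dual_ball. blinfun_apply e z = norm z"
proof -
  let ?F = "cball (0 :: 'a \<Rightarrow>\<^sub>L real) 1 \<inter> {g. blinfun_apply g z = norm z}"
  have "?F face_of cball 0 1"
    by (rule face_of_Int_supporting_hyperplane_linear[OF convex_cball linear_blinfun_apply_at])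
      (simp add: blinfun_apply_le_norm)
  moreover have "?F \<noteq> {}" using exists_norming_functional[of z] by auto
  moreover have "closedin pointwise_topology (blinfun_apply ` ?F)"
    by (rule closedin_blinfun_apply_level_set) (simp add: blinfun_apply_cball_eq closedin_dual_ball_functions)
  ultimately show ?thesis
    using closed_face_of_dual_ball_has_extreme_point unfolding ext_dual_ball_def by blast
qed

section \<open>Slices of the unit ball\<close>

lemma finite_extreme_functionals_large_at:
  fixes x :: "'a::real_normed_vector"
  assumes acc: "weak_star_topology derived_set_of (ext_dual_ball :: ('a \<Rightarrow>\<^sub>L real) set) \<subseteq> cball 0 r"
    and x: "norm x \<le> 1" and rs: "r < s"
  shows "finite {e \<in> (ext_dual_ball :: ('a \<Rightarrow>\<^sub>L real) set). s \<le> blinfun_apply e x}"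
proof (rule ccontr)
  define T where "T = {e \<in> (ext_dual_ball :: ('a \<Rightarrow>\<^sub>L real) set). s \<le> blinfun_apply e x}"
  define S where "S = dual_ball_functions \<inter> {\<phi>::'a \<Rightarrow> real. \<phi> x \<in> {s..}}"
  assume "infinite T"
  moreover have "inj_on blinfun_apply T" by (simp add: inj_on_def blinfun_apply_inject)
  ultimately have "infinite (blinfun_apply ` T)" using finite_imageD by blast
  moreover have "blinfun_apply ` T \<subseteq> S"
    using blinfun_apply_cball_eq unfolding S_def T_def ext_dual_ball_def extreme_point_of_def by blast
  moreover have "compactin pointwise_topology S"
    unfolding S_def
    using closed_Int_compactin[OF closedin_pointwise_topology_vimage[OF continuous_map_eval closed_atLeast]
        compactin_dual_ball_functions]
    by (simp add: Int_commute)
  ultimately have "S \<inter> pointwise_topology derived_set_of (blinfun_apply ` T) \<noteq> {}"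
    using compactin_imp_Bolzano_Weierstrass by blast
  then obtain \<phi> where \<phi>: "\<phi> \<in> S" "\<phi> \<in> pointwise_topology derived_set_of (blinfun_apply ` T)"
    by blast
  then obtain g where "\<phi> = blinfun_apply g"
    unfolding S_def blinfun_apply_cball_eq[symmetric] by blast
  with \<phi> have g: "blinfun_apply g \<in> S"
    and acc_g: "blinfun_apply g \<in> pointwise_topology derived_set_of (blinfun_apply ` T)"
    by simp_all
  have "g \<in> weak_star_topology derived_set_of ext_dual_ball"
    using derived_set_of_mono[of T ext_dual_ball] weak_star_derived_set_of_blinfun_apply[OF acc_g]
    unfolding T_def by blast
  then have "norm g \<le> r" using acc by auto
  moreover have "s \<le> blinfun_apply g x" using g unfolding S_def by simp
  moreover have "blinfun_apply g x \<le> norm g * norm x" using norm_blinfun[of g x] by simp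
  moreover have "norm g * norm x \<le> norm g" using x mult_left_le[of "norm x" "norm g"] by simp
  ultimately show False using rs by linarith
qed

lemma common_kernel_not_subset_finite_span:
  fixes L :: "('a::real_vector \<Rightarrow> real) set"
  assumes inf: "\<not> (\<exists>B :: 'a set. finite B \<and> span B = UNIV)"
    and "finite L" and "\<And>l. l \<in> L \<Longrightarrow> linear l"
  shows "\<not> (\<exists>B. finite B \<and> {w. \<forall>l\<in>L. l w = 0} \<subseteq> span B)"
  using assms(2,3)
proof (induction L rule: finite_induct)
  case empty
  then show ?case using inf by auto
next
  case (insert l L)
  show ?case
  proof
    assume "\<exists>B. finite B \<and> {w. \<forall>l'\<in>insert l L. l' w = 0} \<subseteq> span B"
    then obtain B where B: "finite B" "{w. \<forall>l'\<in>insert l L. l' w = 0} \<subseteq> span B" by blast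
    have "\<exists>B'. finite B' \<and> {w. \<forall>l'\<in>L. l' w = 0} \<subseteq> span B'"
    proof (cases "\<exists>v. (\<forall>l'\<in>L. l' v = 0) \<and> l v \<noteq> 0")
      case True
      \<comment> \<open>one more vector spans the kernel of L modulo the kernel of l\<close>
      then obtain v where v: "\<forall>l'\<in>L. l' v = 0" "l v \<noteq> 0" by blast
      have "{w. \<forall>l'\<in>L. l' w = 0} \<subseteq> span (insert v B)"
      proof
        fix w assume w: "w \<in> {w. \<forall>l'\<in>L. l' w = 0}"
        define c where "c = l w / l v"
        have "\<forall>l'\<in>insert l L. l' (w - c *\<^sub>R v) = 0"
          using w v insert.prems by (auto simp: c_def linear_diff linear_scale)
        then have "w - c *\<^sub>R v \<in> span (insert v B)"
          using B(2) span_mono[of B "insert v B"] by blast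
        moreover have "c *\<^sub>R v \<in> span (insert v B)" by (simp add: span_base span_scale)
        ultimately have "(w - c *\<^sub>R v) + c *\<^sub>R v \<in> span (insert v B)" by (rule span_add)
        then show "w \<in> span (insert v B)" by simp
      qed
      then show ?thesis using B(1) by blast
    next
      case False
      then show ?thesis using B by blast
    qed
    then show False using insert by blast
  qed
qed

lemma exists_nonzero_in_common_kernel:
  fixes L :: "('a::real_vector \<Rightarrow> real) set"
  assumes "\<not> (\<exists>B :: 'a set. finite B \<and> span B = UNIV)"
    and "finite L" and "\<And>l. l \<in> L \<Longrightarrow> linear l"
  shows "\<exists>y. y \<noteq> 0 \<and> (\<forall>l\<in>L. l y = 0)"
proof (rule ccontr)
  assume "\<not> ?thesis"
  then have "{w. \<forall>l\<in>L. l w = 0} \<subseteq> span {}" by auto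
  then show False using common_kernel_not_subset_finite_span[OF assms] by blast
qed

lemma slice_nonempty:
  fixes f :: "'a::real_normed_vector \<Rightarrow>\<^sub>L real"
  assumes "0 < \<alpha>"
  shows "slice f \<alpha> \<noteq> {}"
proof
  assume "slice f \<alpha> = {}"
  then have h: "blinfun_apply f x \<le> norm f - \<alpha>" if "norm x \<le> 1" for x
    using that unfolding slice_def by force
  have "norm (blinfun_apply f x) \<le> (norm f - \<alpha>) * norm x" for x
  proof (cases "x = 0")
    case False
    define u where "u = x /\<^sub>R norm x"
    have "norm u \<le> 1" "norm (- u) \<le> 1" using False by (simp_all add: u_def)
    then have "\<bar>blinfun_apply f u\<bar> \<le> norm f - \<alpha>"
      using h[of u] h[of "- u"] by (simp add: blinfun.minus_right abs_le_iff)
    moreover have "blinfun_apply f x = norm x * blinfun_apply f u"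
      using False by (simp add: u_def blinfun.scaleR_right)
    ultimately show ?thesis by (simp add: abs_mult mult.commute mult_left_mono)
  qed simp
  then have "norm f \<le> norm f - \<alpha>"
    using h[of 0] by (intro norm_blinfun_bound) simp_all
  then show False using assms by simp
qed

lemma norm_add_scaleR_le_1:
  fixes x u :: "'a::real_normed_vector"
  assumes x: "norm x \<le> 1" and u: "norm u \<le> 1" and st: "s + t \<le> 1" and c: "\<bar>c\<bar> \<le> t"
    and kernel: "\<And>e. e \<in> ext_dual_ball \<Longrightarrow> s \<le> blinfun_apply e x \<Longrightarrow> blinfun_apply e u = 0"
  shows "norm (x + c *\<^sub>R u) \<le> 1"
proof -
  obtain e where e: "e \<in> ext_dual_ball" "blinfun_apply e (x + c *\<^sub>R u) = norm (x + c *\<^sub>R u)"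
    using exists_extreme_norming_functional by blast
  have ne: "norm e \<le> 1" using e(1) by (simp add: ext_dual_ball_def extreme_point_of_def)
  have eval: "blinfun_apply e (x + c *\<^sub>R u) = blinfun_apply e x + c * blinfun_apply e u"
    by (simp add: blinfun.add_right blinfun.scaleR_right)
  show ?thesis
  proof (cases "s \<le> blinfun_apply e x")
    case True
    then show ?thesis
      using e kernel eval blinfun_apply_le_norm[OF ne, of x] x by simp
  next
    case False
    have "\<bar>blinfun_apply e u\<bar> \<le> 1"
      using blinfun_apply_le_norm[OF ne, of u] blinfun_apply_le_norm[OF ne, of "- u"] u
      by (simp add: blinfun.minus_right abs_le_iff)
    have "c * blinfun_apply e u \<le> \<bar>c\<bar> * \<bar>blinfun_apply e u\<bar>"
      by (simp flip: abs_mult)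
    also have "\<dots> \<le> t * 1"
      using c \<open>\<bar>blinfun_apply e u\<bar> \<le> 1\<close> by (intro mult_mono) auto
    finally have "c * blinfun_apply e u \<le> t" by simp
    then show ?thesis using e(2) eval False st by linarith
  qed
qed

lemma slice_contains_segment:
  fixes f :: "'a::real_normed_vector \<Rightarrow>\<^sub>L real"
  assumes inf_dim: "\<not> (\<exists>B :: 'a set. finite B \<and> span B = UNIV)"
    and acc: "weak_star_topology derived_set_of (ext_dual_ball :: ('a \<Rightarrow>\<^sub>L real) set) \<subseteq> cball 0 r"
    and r: "r < 1" and x: "x \<in> slice f \<alpha>"
  obtains u where "norm u = 1" "\<And>c. \<bar>c\<bar> \<le> (1 - r) / 2 \<Longrightarrow> x + c *\<^sub>R u \<in> slice f \<alpha>"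
proof -
  define s t where "s = (1 + r) / 2" and "t = (1 - r) / 2"
  define E where "E = {e \<in> (ext_dual_ball :: ('a \<Rightarrow>\<^sub>L real) set). s \<le> blinfun_apply e x}"
  have "finite E"
    unfolding E_def using x r by (intro finite_extreme_functionals_large_at[OF acc])
      (auto simp: slice_def s_def)
  then have "finite (blinfun_apply ` insert f E)" by simp
  moreover have "linear l" if "l \<in> blinfun_apply ` insert f E" for l
    using that blinfun.bounded_linear_right bounded_linear.linear by blast
  ultimately obtain y where y: "y \<noteq> 0" "\<forall>l\<in>blinfun_apply ` insert f E. l y = 0"
    using exists_nonzero_in_common_kernel[OF inf_dim] by blast
  define u where "u = y /\<^sub>R norm y"
  have u: "norm u = 1" "blinfun_apply f u = 0" "\<And>e. e \<in> E \<Longrightarrow> blinfun_apply e u = 0"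
    using y by (auto simp: u_def blinfun.scaleR_right)
  have "s + t = 1" by (simp add: s_def t_def field_simps)
  then have "x + c *\<^sub>R u \<in> slice f \<alpha>" if "\<bar>c\<bar> \<le> t" for c
    using norm_add_scaleR_le_1[of x u s t c] x u that
    by (auto simp: slice_def E_def blinfun.add_right blinfun.scaleR_right)
  then show thesis using that u(1) by (simp add: t_def)
qed

theorem proposition2p2:
  assumes inf_dim: "\<not> (\<exists>B :: 'a::banach set. finite B \<and> span B = UNIV)"
    and poly: "II_polyhedral TYPE('a)"
  shows "\<exists>\<delta>>0. \<forall>(f :: 'a \<Rightarrow>\<^sub>L real) (\<alpha>::real).
           f \<noteq> 0 \<and> \<alpha> > 0 \<longrightarrow> diameter (slice f \<alpha>) \<ge> \<delta>"
proof -
  obtain r :: real where r: "0 < r" "r < 1"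
    and acc: "weak_star_topology derived_set_of (ext_dual_ball :: ('a \<Rightarrow>\<^sub>L real) set) \<subseteq> cball 0 r"
    using poly unfolding II_polyhedral_def by blast
  have "1 - r \<le> diameter (slice f \<alpha>)" if \<alpha>: "0 < \<alpha>" for f :: "'a \<Rightarrow>\<^sub>L real" and \<alpha>
  proof -
    define t where "t = (1 - r) / 2"
    obtain x where x: "x \<in> slice f \<alpha>" using slice_nonempty[OF \<alpha>] by blast
    then obtain u where u: "norm u = 1" "\<And>c. \<bar>c\<bar> \<le> t \<Longrightarrow> x + c *\<^sub>R u \<in> slice f \<alpha>"
      using slice_contains_segment[OF inf_dim acc r(2)] unfolding t_def by blast
    have "bounded (slice f \<alpha>)"
      by (rule bounded_subset[OF bounded_cball[of 0 1]]) (auto simp: slice_def)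
    moreover have "x + t *\<^sub>R u \<in> slice f \<alpha>"
      by (rule u(2)) (use r(2) in \<open>simp add: t_def\<close>)
    moreover have "x + (- t) *\<^sub>R u \<in> slice f \<alpha>"
      by (rule u(2)) (use r(2) in \<open>simp add: t_def\<close>)
    ultimately have "dist (x + t *\<^sub>R u) (x + (- t) *\<^sub>R u) \<le> diameter (slice f \<alpha>)"
      by (rule diameter_bounded_bound)
    moreover have "dist (x + t *\<^sub>R u) (x + (- t) *\<^sub>R u) = 1 - r"
      using u(1) r(2) by (simp add: dist_norm t_def flip: scaleR_2)
    ultimately show ?thesis by simp
  qed
  then show ?thesis using r(2) by (intro exI[of _ "1 - r"]) auto
qed

end
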